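(* The only (one-sided) infinite binary words that contain no $3$-antipower as a factor are the words $0^\omega$, $(01)^\omega$, $110^\omega$, $1010^\omega$, $0^i10^\omega$ for $i \geq 0$, and their bitwise complements.
   Context: A $3$-antipower is a finite word $u_1u_2u_3$ with $|u_1|=|u_2|=|u_3|$ and $u_1,u_2,u_3$ pairwise distinct; a factor is a contiguous subword. For a finite word $x$, $x^\omega$ is the one-sided infinite word $xxx\cdots$. The bitwise complement exchanges $0$ and $1$. *)

theory Defs
  imports Main
begin

text \<open>Binary alphabet: the letter 0 is False, the letter 1 is True.
  One-sided infinite words are functions nat => letter.\<close>

definition is_3antipower :: "'a list \<Rightarrow> bool" where
  "is_3antipower v \<longleftrightarrow> (\<exists>u1 u2 u3. v = u1 @ u2 @ u3 \<and>
      length u1 = length u2 \<and> length u2 = length u3 \<and>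
      u1 \<noteq> u2 \<and> u1 \<noteq> u3 \<and> u2 \<noteq> u3)"

definition factor :: "(nat \<Rightarrow> 'a) \<Rightarrow> nat \<Rightarrow> nat \<Rightarrow> 'a list" where
  "factor w i n = map (\<lambda>k. w (i + k)) [0..<n]"

definition contains_3antipower :: "(nat \<Rightarrow> 'a) \<Rightarrow> bool" where
  "contains_3antipower w \<longleftrightarrow> (\<exists>i n. is_3antipower (factor w i n))"

text \<open>x^omega for a nonempty finite word x\<close>
definition omega :: "'a list \<Rightarrow> nat \<Rightarrow> 'a" where
  "omega x n = x ! (n mod length x)"

definition prepend :: "'a list \<Rightarrow> (nat \<Rightarrow> 'a) \<Rightarrow> nat \<Rightarrow> 'a" where
  "prepend u w n = (if n < length u then u ! n else w (n - length u))"

definition complement :: "(nat \<Rightarrow> bool) \<Rightarrow> nat \<Rightarrow> bool" where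
  "complement w n = (\<not> w n)"

definition base_words :: "(nat \<Rightarrow> bool) set" where
  "base_words =
     {omega [False],
      omega [False, True],
      prepend [True, True] (omega [False]),
      prepend [True, False, True] (omega [False])}
     \<union> {prepend (replicate i False @ [True]) (omega [False]) | i. True}"

end

theory Submission
  imports Defs
begin

text \<open>
  In a binary word without 3-antipowers no letter \<open>c\<close> is followed by a run of at least two
  copies of the other letter and then by \<open>c\<close> again: for runs of length 2, 3 and 5 an exhaustive
  search over the next seven letters finds a 3-antipower, and for a run of any other length \<open>k\<close>
  the three blocks of length \<open>(k + 1) div 3 + 1\<close> starting at the first \<open>c\<close> are pairwise distinct.
  Hence a change of letter followed by a repetition forces the word to be constant from there on,
  and a word starting with 0 is a run of zeros, then an alternating segment (possibly infinite),
  then a constant tail. All such words except the listed ones contain an explicit 3-antipower,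
  while in the listed words two of any three consecutive blocks of equal length coincide.
\<close>

lemma length_factor [simp]: "length (factor w i n) = n"
  by (simp add: factor_def)

lemma nth_factor [simp]: "k < n \<Longrightarrow> factor w i n ! k = w (i + k)"
  by (simp add: factor_def)

lemma factor_add: "factor w i (m + n) = factor w i m @ factor w (i + m) n"
  by (rule nth_equalityI) (auto simp: nth_append add.assoc)

lemma factor_eq_factor_iff: "factor w i n = factor w j n \<longleftrightarrow> (\<forall>k<n. w (i + k) = w (j + k))"
  by (simp add: list_eq_iff_nth_eq)

lemma factor_complement: "factor (complement w) i n = map Not (factor w i n)"
  by (simp add: factor_def complement_def)

lemma is_3antipower_append:
  assumes "length u1 = length u2" "length u2 = length u3"
  shows "is_3antipower (u1 @ u2 @ u3) \<longleftrightarrow> u1 \<noteq> u2 \<and> u1 \<noteq> u3 \<and> u2 \<noteq> u3"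
proof
  assume "is_3antipower (u1 @ u2 @ u3)"
  then obtain v1 v2 v3 where v: "u1 @ u2 @ u3 = v1 @ v2 @ v3"
    and len: "length v1 = length v2" "length v2 = length v3"
    and distinct: "v1 \<noteq> v2" "v1 \<noteq> v3" "v2 \<noteq> v3"
    unfolding is_3antipower_def by blast
  have "length v1 = length u1"
    using arg_cong[OF v, of length] assms len by simp
  then have "u1 = v1" and "u2 @ u3 = v2 @ v3"
    using v by (simp_all add: append_eq_append_conv)
  moreover from this(2) have "u2 = v2" and "u3 = v3"
    using \<open>length v1 = length u1\<close> assms len by (simp_all add: append_eq_append_conv)
  ultimately show "u1 \<noteq> u2 \<and> u1 \<noteq> u3 \<and> u2 \<noteq> u3"
    using distinct by blast
next
  assume "u1 \<noteq> u2 \<and> u1 \<noteq> u3 \<and> u2 \<noteq> u3"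
  with assms show "is_3antipower (u1 @ u2 @ u3)"
    unfolding is_3antipower_def by blast
qed

lemma is_3antipower_factor:
  "is_3antipower (factor w s (3 * n)) \<longleftrightarrow>
     factor w s n \<noteq> factor w (s + n) n \<and> factor w s n \<noteq> factor w (s + 2 * n) n \<and>
     factor w (s + n) n \<noteq> factor w (s + 2 * n) n"
proof -
  have "factor w s (3 * n) = factor w s (n + (n + n))"
    by (simp add: numeral_3_eq_3)
  also have "\<dots> = factor w s n @ factor w (s + n) n @ factor w (s + 2 * n) n"
    by (simp add: factor_add add.assoc mult_2)
  finally show ?thesis by (simp add: is_3antipower_append)
qed

lemma contains_3antipower_iff: "contains_3antipower w \<longleftrightarrow> (\<exists>s n. is_3antipower (factor w s (3 * n)))"
proof
  assume "contains_3antipower w"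
  then obtain s m where anti: "is_3antipower (factor w s m)"
    unfolding contains_3antipower_def by blast
  then obtain u1 u2 u3 where split: "factor w s m = u1 @ u2 @ u3"
    and "length u1 = length u2" "length u2 = length u3"
    unfolding is_3antipower_def by blast
  moreover have "m = length u1 + length u2 + length u3"
    using arg_cong[OF split, of length] by simp
  ultimately have "m = 3 * length u1" by simp
  with anti have "is_3antipower (factor w s (3 * length u1))" by simp
  then show "\<exists>s n. is_3antipower (factor w s (3 * n))" by blast
qed (auto simp: contains_3antipower_def)

lemma contains_3antipowerI:
  assumes "a < n" "w (s + a) \<noteq> w (s + n + a)"
    and "b < n" "w (s + b) \<noteq> w (s + 2 * n + b)"
    and "c < n" "w (s + n + c) \<noteq> w (s + 2 * n + c)"
  shows "contains_3antipower w"
  unfolding contains_3antipower_iff is_3antipower_factor factor_eq_factor_iff using assms by blast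

lemma not_contains_3antipowerI:
  "(\<And>s n. \<not> is_3antipower (factor w s (3 * n))) \<Longrightarrow> \<not> contains_3antipower w"
  unfolding contains_3antipower_iff by blast

lemma contains_3antipower_complement: "contains_3antipower (complement w) \<longleftrightarrow> contains_3antipower w"
proof -
  have "inj Not" by (rule injI) simp
  then show ?thesis
    unfolding contains_3antipower_iff is_3antipower_factor by (simp add: factor_complement)
qed

lemma contains_3antipower_if_factor_blocks:
  assumes "factor w i m = u1 @ u2 @ u3" "length u1 = length u2" "length u2 = length u3"
    and "u1 \<noteq> u2" "u1 \<noteq> u3" "u2 \<noteq> u3"
  shows "contains_3antipower w"
  using assms unfolding contains_3antipower_def is_3antipower_def by blast

lemma take_drop_factor: "s + n \<le> m \<Longrightarrow> take n (drop s (factor w i m)) = factor w (i + s) n"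
  by (rule nth_equalityI) (auto simp: add.assoc)

definition list_contains_3antipower :: "'a list \<Rightarrow> bool" where
  "list_contains_3antipower xs \<longleftrightarrow>
     (\<exists>n \<in> set [1..<length xs]. \<exists>s \<in> set [0..<length xs]. s + 3 * n \<le> length xs \<and>
        take n (drop s xs) \<noteq> take n (drop (s + n) xs) \<and>
        take n (drop s xs) \<noteq> take n (drop (s + 2 * n) xs) \<and>
        take n (drop (s + n) xs) \<noteq> take n (drop (s + 2 * n) xs))"

lemma contains_3antipower_if_list_contains:
  "list_contains_3antipower (factor w i m) \<Longrightarrow> contains_3antipower w"
proof -
  assume "list_contains_3antipower (factor w i m)"
  then obtain s n where "s + 3 * n \<le> m"
    and "take n (drop s (factor w i m)) \<noteq> take n (drop (s + n) (factor w i m))"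
    and "take n (drop s (factor w i m)) \<noteq> take n (drop (s + 2 * n) (factor w i m))"
    and "take n (drop (s + n) (factor w i m)) \<noteq> take n (drop (s + 2 * n) (factor w i m))"
    unfolding list_contains_3antipower_def by auto
  then have "is_3antipower (factor w (i + s) (3 * n))"
    by (simp add: is_3antipower_factor take_drop_factor add.assoc)
  then show ?thesis
    unfolding contains_3antipower_def by blast
qed

lemma short_inner_runs_contain_3antipower:
  "\<forall>d \<in> {3, 4, 6}. \<forall>ys \<in> set (List.n_lists 7 [False, True]).
     list_contains_3antipower ((True # replicate (d - 1) False @ [True]) @ ys)"
  by code_simp

lemma factor_isolated_run:
  assumes "w i" "w (i + d)" "\<And>k. i < k \<Longrightarrow> k < i + d \<Longrightarrow> \<not> w k" "0 < d"
  shows "factor w i (d + 1) = True # replicate (d - 1) False @ [True]"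
proof (rule nth_equalityI)
  fix k assume "k < length (factor w i (d + 1))"
  then consider "k = 0" | "0 < k" "k < d" | "k = d" by fastforce
  then show "factor w i (d + 1) ! k = (True # replicate (d - 1) False @ [True]) ! k"
  proof cases
    case 3
    then show ?thesis using assms by (simp add: nth_append)
  qed (use assms in \<open>auto simp: nth_Cons' nth_append\<close>)
qed (use assms in simp)

lemma inner_run_contains_3antipower:
  fixes w :: "nat \<Rightarrow> bool"
  assumes "w i = x" "w (i + d) = x" "\<And>k. i < k \<Longrightarrow> k < i + d \<Longrightarrow> w k \<noteq> x" "3 \<le> d"
  shows "contains_3antipower w"
proof -
  have run_of_zeros: "contains_3antipower v"
    if v: "v i" "v (i + d)" "\<And>k. i < k \<Longrightarrow> k < i + d \<Longrightarrow> \<not> v k" for v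
  proof (cases "d \<in> {3, 4, 6}")
    case True
    have "factor v i (d + 1 + 7) = factor v i (d + 1) @ factor v (i + (d + 1)) 7"
      by (rule factor_add)
    also have "\<dots> = (True # replicate (d - 1) False @ [True]) @ factor v (i + (d + 1)) 7"
      using factor_isolated_run[OF v] \<open>3 \<le> d\<close> by simp
    finally have run:
      "factor v i (d + 1 + 7) = (True # replicate (d - 1) False @ [True]) @ factor v (i + (d + 1)) 7" .
    have "factor v (i + (d + 1)) 7 \<in> set (List.n_lists 7 [False, True])"
      by (auto simp: set_n_lists)
    then have "list_contains_3antipower (factor v i (d + 1 + 7))"
      unfolding run using short_inner_runs_contain_3antipower True by blast
    then show ?thesis
      by (rule contains_3antipower_if_list_contains)
  next
    case False
    txt \<open>With \<open>2 * n < d < 3 * n\<close> the first block starts with 1 and the other two inside the run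
      of zeros; at offset \<open>d - 2 * n\<close> the third block meets the closing 1 while the second is still
      inside the run.\<close>
    define n where "n = d div 3 + 1"
    have n: "2 * n < d" "d < 3 * n"
      using False \<open>3 \<le> d\<close> unfolding n_def by simp_all presburger
    show ?thesis
    proof (rule contains_3antipowerI[of 0 n v i 0 "d - 2 * n"])
      show "v (i + 0) \<noteq> v (i + n + 0)" "v (i + 0) \<noteq> v (i + 2 * n + 0)"
        using v n by auto
      have "i + 2 * n + (d - 2 * n) = i + d"
        using n by simp
      then show "v (i + n + (d - 2 * n)) \<noteq> v (i + 2 * n + (d - 2 * n))"
        using v n by auto
    qed (use n in auto)
  qed
  show ?thesis
  proof (cases x)
    case False
    then have "contains_3antipower (complement w)"
      using assms by (intro run_of_zeros) (auto simp: complement_def)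
    then show ?thesis
      by (simp add: contains_3antipower_complement)
  qed (use assms run_of_zeros in auto)
qed

lemma constant_after_change_and_repeat:
  fixes w :: "nat \<Rightarrow> bool"
  assumes free: "\<not> contains_3antipower w"
    and change: "w i \<noteq> w (Suc i)" and repeat: "w (Suc i) = w (Suc (Suc i))"
    and "Suc i \<le> m"
  shows "w m = w (Suc i)"
  using \<open>Suc i \<le> m\<close>
proof (induction m rule: less_induct)
  case (less m)
  show ?case
  proof (rule ccontr)
    assume "w m \<noteq> w (Suc i)"
    then have "m \<noteq> Suc i" "m \<noteq> Suc (Suc i)"
      using repeat by auto
    with less.prems have "Suc (Suc i) < m" by simp
    moreover have "w (i + (m - i)) = w i"
      using \<open>w m \<noteq> w (Suc i)\<close> change less.prems by auto
    moreover have "w k \<noteq> w i" if "i < k" "k < i + (m - i)" for k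
      using less.IH[of k] change that by (cases "k = Suc i") auto
    ultimately have "contains_3antipower w"
      by (intro inner_run_contains_3antipower[of w i "w i" "m - i"]) auto
    with free show False ..
  qed
qed

lemma alternating_segment:
  fixes w :: "nat \<Rightarrow> bool"
  assumes "\<And>k. b \<le> k \<Longrightarrow> k < p \<Longrightarrow> w (Suc k) \<noteq> w k" "\<not> w b" "b \<le> k" "k \<le> p"
  shows "w k = odd (k - b)"
  using \<open>b \<le> k\<close> \<open>k \<le> p\<close>
proof (induction k rule: dec_induct)
  case (step k)
  then show ?case
    using assms(1)[of k] by (simp add: Suc_diff_le)
qed (use assms in simp)

lemma alternation_then_constant_eq:
  fixes w :: "nat \<Rightarrow> bool"
  assumes free: "\<not> contains_3antipower w" and zeros: "\<And>k. k \<le> b \<Longrightarrow> \<not> w k"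
    and "b < p" and alternating: "\<And>k. b \<le> k \<Longrightarrow> k < p \<Longrightarrow> w (Suc k) \<noteq> w k"
    and repeat: "w (Suc p) = w p"
  shows "w = (\<lambda>k. odd (min k p - b))"
proof
  fix k
  obtain q where p: "p = Suc q" "b \<le> q"
    using \<open>b < p\<close> by (cases p) auto
  have segment: "w k = odd (k - b)" if "b \<le> k" "k \<le> p" for k
    by (rule alternating_segment[where p = p]) (use alternating zeros that in auto)
  have "w k = w p" if "p \<le> k"
  proof -
    have "w q \<noteq> w (Suc q)"
      using alternating[of q] p by auto
    moreover have "w (Suc q) = w (Suc (Suc q))"
      using repeat p by simp
    ultimately show ?thesis
      using constant_after_change_and_repeat[OF free, of q k] p that by simp
  qed
  then show "w k = odd (min k p - b)"
    using zeros[of k] segment[of k] segment[of p] \<open>b < p\<close> by (cases "k \<le> b"; cases "k \<le> p") auto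
qed

text \<open>Truncated subtraction makes \<open>k - b = 0\<close> for \<open>k \<le> b\<close>: the first form is \<open>0\<^sup>b (01)\<^sup>\<omega>\<close>;
  the second is 0 up to position \<open>b\<close>, alternates up to position \<open>p\<close> and then repeats the letter at \<open>p\<close>.\<close>

lemma antipower_free_shape:
  fixes w :: "nat \<Rightarrow> bool"
  assumes free: "\<not> contains_3antipower w" and "\<not> w 0"
  obtains b where "w = (\<lambda>k. odd (k - b))"
  | b p where "w = (\<lambda>k. odd (min k p - b))"
proof (cases "\<exists>k. w k")
  case False
  then have "w = (\<lambda>k. odd (min k 0 - 0))" by auto
  then show ?thesis by (rule that(2))
next
  case True
  then obtain a where "w a" and "\<And>k. k < a \<Longrightarrow> \<not> w k"
    using exists_least_iff[of w] by blast
  moreover obtain b where "a = Suc b"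
    using \<open>w a\<close> \<open>\<not> w 0\<close> by (cases a) auto
  ultimately have first_one: "w (Suc b)" and zeros: "\<And>k. k \<le> b \<Longrightarrow> \<not> w k"
    by auto
  show ?thesis
  proof (cases "\<exists>p \<ge> b. w (Suc p) = w p")
    case False
    then have alternating: "\<And>k. b \<le> k \<Longrightarrow> w (Suc k) \<noteq> w k"
      by blast
    have "w k = odd (k - b)" for k
      using alternating_segment[of b k w k] alternating zeros by (cases "b \<le> k") auto
    then have "w = (\<lambda>k. odd (k - b))" ..
    then show ?thesis by (rule that(1))
  next
    case True
    define p where "p = (LEAST p. b \<le> p \<and> w (Suc p) = w p)"
    have "b \<le> p" and repeat: "w (Suc p) = w p"
      using LeastI_ex[OF True[unfolded Bex_def]] unfolding p_def by auto
    moreover have "p \<noteq> b"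
      using first_one zeros[of b] repeat by auto
    moreover have "\<And>k. b \<le> k \<Longrightarrow> k < p \<Longrightarrow> w (Suc k) \<noteq> w k"
      unfolding p_def using not_less_Least by blast
    ultimately have "w = (\<lambda>k. odd (min k p - b))"
      using alternation_then_constant_eq[OF free zeros] by simp
    then show ?thesis by (rule that(2))
  qed
qed

lemma contains_3antipower_zeros_then_alternating:
  assumes "0 < b"
  shows "contains_3antipower (\<lambda>k. odd (k - b))"
proof -
  obtain j where "b = Suc j"
    using assms by (cases b) auto
  then have "factor (\<lambda>k. odd (k - b)) j 9 = [False, False, True] @ [False, True, False] @ [True, False, True]"
    by (simp add: factor_def upt_rec)
  then show ?thesis
    by (rule contains_3antipower_if_factor_blocks) auto
qed

lemma contains_3antipower_zeros_then_ones:
  assumes "2 \<le> b"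
  shows "contains_3antipower (\<lambda>k. odd (min k (b + 1) - b))"
proof -
  obtain j where "b = 2 + j"
    using le_Suc_ex[OF assms] by blast
  then have "factor (\<lambda>k. odd (min k (b + 1) - b)) j 6 = [False, False] @ [False, True] @ [True, True]"
    by (simp add: factor_def upt_rec)
  then show ?thesis
    by (rule contains_3antipower_if_factor_blocks) auto
qed

lemma contains_3antipower_zeros_then_10_ones:
  assumes "0 < b"
  shows "contains_3antipower (\<lambda>k. odd (min k (b + 3) - b))"
proof -
  obtain j where "b = Suc j"
    using assms by (cases b) auto
  then have "factor (\<lambda>k. odd (min k (b + 3) - b)) j 6 = [False, False] @ [True, False] @ [True, True]"
    by (simp add: factor_def upt_rec)
  then show ?thesis
    by (rule contains_3antipower_if_factor_blocks) auto
qed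

lemma contains_3antipower_long_alternation:
  assumes "b + 4 \<le> p"
  shows "contains_3antipower (\<lambda>k. odd (min k p - b))"
proof -
  obtain q where p: "p = b + 4 + q"
    using le_Suc_ex[OF assms] by blast
  have "factor (\<lambda>k. odd (min k (b + 4 + q) - b)) (b + q) 9 =
      [odd q, even q, odd q] @ [even q, odd q, odd q] @ [odd q, odd q, odd q]"
    by (auto simp: factor_def upt_rec)
  then show ?thesis
    unfolding p
    by (rule contains_3antipower_if_factor_blocks) simp_all
qed

lemma base_words_eq:
  "base_words = {\<lambda>k. False, odd, \<lambda>k. k < 2, \<lambda>k. k = 0 \<or> k = 2} \<union> range (\<lambda>a k. k = a)"
proof -
  have zeros: "omega [False] = (\<lambda>k. False)"
    by (simp add: omega_def fun_eq_iff)
  have "omega [False, True] k = odd k" for k :: nat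
  proof -
    have "omega [False, True] k = [False, True] ! (k mod 2)"
      by (simp add: omega_def numeral_2_eq_2)
    moreover have "k mod 2 = 0 \<or> k mod 2 = 1" by arith
    ultimately show ?thesis by (auto simp: odd_iff_mod_2_eq_one)
  qed
  then have "omega [False, True] = odd" ..
  moreover have "prepend (replicate a False @ [True]) (omega [False]) = (\<lambda>k. k = a)" for a
    by (auto simp: zeros fun_eq_iff prepend_def nth_append)
  moreover have "prepend [True, True] (omega [False]) = (\<lambda>k. k < 2)"
    and "prepend [True, False, True] (omega [False]) = (\<lambda>k. k = 0 \<or> k = 2)"
    by (auto simp: zeros fun_eq_iff prepend_def nth_Cons split: nat.split)
  ultimately show ?thesis
    unfolding base_words_def zeros by auto
qed

lemma complement_complement [simp]: "complement (complement w) = w"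
  by (simp add: complement_def fun_eq_iff)

lemma antipower_free_alternation_then_constant:
  assumes free: "\<not> contains_3antipower (\<lambda>k. odd (min k p - b))" (is "\<not> contains_3antipower ?w")
  shows "?w \<in> base_words \<union> complement ` base_words"
proof -
  consider "p \<le> b" | "p = b + 1" | "p = b + 2" | "p = b + 3" | "b + 4 \<le> p" by linarith
  then show ?thesis
  proof cases
    case 1
    then have "?w = (\<lambda>k. False)"
      unfolding fun_eq_iff min_def by presburger
    then show ?thesis by (simp add: base_words_eq)
  next
    case 2
    then have "b = 0 \<or> b = 1"
      using free contains_3antipower_zeros_then_ones[of b] by fastforce
    then have "?w = complement (\<lambda>k. k = 0) \<or> ?w = complement (\<lambda>k. k < 2)"
      unfolding 2 fun_eq_iff complement_def min_def by presburger
    then show ?thesis by (auto simp: base_words_eq)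
  next
    case 3
    then have "?w = (\<lambda>k. k = Suc b)"
      unfolding fun_eq_iff min_def by presburger
    then show ?thesis by (auto simp: base_words_eq)
  next
    case 4
    then have "b = 0"
      using free contains_3antipower_zeros_then_10_ones by blast
    then have "?w = complement (\<lambda>k. k = 0 \<or> k = 2)"
      unfolding 4 fun_eq_iff complement_def min_def by presburger
    then show ?thesis by (auto simp: base_words_eq)
  next
    case 5
    then show ?thesis
      using free contains_3antipower_long_alternation by blast
  qed
qed

lemma antipower_free_starting_with_0:
  fixes w :: "nat \<Rightarrow> bool"
  assumes free: "\<not> contains_3antipower w" and "\<not> w 0"
  shows "w \<in> base_words \<union> complement ` base_words"
proof (rule antipower_free_shape[OF assms])
  fix b assume w: "w = (\<lambda>k. odd (k - b))"
  then have "b = 0"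
    using free contains_3antipower_zeros_then_alternating by blast
  with w have "w = odd" by simp
  then show ?thesis by (simp add: base_words_eq)
next
  fix b p assume "w = (\<lambda>k. odd (min k p - b))"
  then show ?thesis
    using free antipower_free_alternation_then_constant by blast
qed

lemma antipower_free_in_base_words:
  fixes w :: "nat \<Rightarrow> bool"
  assumes "\<not> contains_3antipower w"
  shows "w \<in> base_words \<union> complement ` base_words"
proof (cases "w 0")
  case True
  then have "complement w \<in> base_words \<union> complement ` base_words"
    using assms by (intro antipower_free_starting_with_0) (simp_all add: contains_3antipower_complement complement_def)
  then show ?thesis
    by (metis UnE UnI1 UnI2 complement_complement image_iff)
qed (rule antipower_free_starting_with_0[OF assms])

lemma not_3antipower_if_single_deviation:
  assumes "\<And>k. s \<le> k \<Longrightarrow> k < s + 3 * n \<Longrightarrow> k \<noteq> t \<Longrightarrow> w k = x"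
  shows "\<not> is_3antipower (factor w s (3 * n))"
proof -
  consider "t < s + n" | "s + n \<le> t" "t < s + 2 * n" | "s + 2 * n \<le> t" by linarith
  then show ?thesis
    by cases (simp_all add: is_3antipower_factor factor_eq_factor_iff assms)
qed

lemma antipower_free_constant: "\<not> contains_3antipower (\<lambda>k. x)"
  by (rule not_contains_3antipowerI) (simp add: is_3antipower_factor factor_eq_factor_iff)

lemma antipower_free_odd: "\<not> contains_3antipower (odd :: nat \<Rightarrow> bool)"
  by (rule not_contains_3antipowerI) (simp add: is_3antipower_factor factor_eq_factor_iff)

lemma antipower_free_single_one: "\<not> contains_3antipower (\<lambda>k. k = a)"
  by (rule not_contains_3antipowerI, rule not_3antipower_if_single_deviation[where t = a]) auto

lemma antipower_free_11_then_zeros: "\<not> contains_3antipower (\<lambda>k :: nat. k < 2)"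
proof (rule not_contains_3antipowerI)
  fix s n :: nat
  consider "0 < s" | "s = 0" "n \<le> 1" | "s = 0" "2 \<le> n" by linarith
  then show "\<not> is_3antipower (factor (\<lambda>k. k < 2) s (3 * n))"
  proof cases
    case 1
    then show ?thesis by (intro not_3antipower_if_single_deviation[of s n 1]) auto
  qed (auto simp: is_3antipower_factor factor_eq_factor_iff le_Suc_eq)
qed

lemma antipower_free_101_then_zeros: "\<not> contains_3antipower (\<lambda>k :: nat. k = 0 \<or> k = 2)"
proof (rule not_contains_3antipowerI)
  fix s n :: nat
  consider "0 < s" | "s = 0" "n \<le> 2" | "s = 0" "3 \<le> n" by linarith
  then show "\<not> is_3antipower (factor (\<lambda>k. k = 0 \<or> k = 2) s (3 * n))"
  proof cases
    case 1
    then show ?thesis by (intro not_3antipower_if_single_deviation[of s n 2]) auto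
  qed (auto simp: is_3antipower_factor factor_eq_factor_iff le_Suc_eq numeral_2_eq_2)
qed

lemma base_words_antipower_free: "v \<in> base_words \<Longrightarrow> \<not> contains_3antipower v"
  unfolding base_words_eq
  using antipower_free_constant[of False] antipower_free_odd antipower_free_single_one antipower_free_11_then_zeros antipower_free_101_then_zeros
  by auto

theorem corollary6:
  fixes w :: "nat \<Rightarrow> bool"
  shows "\<not> contains_3antipower w \<longleftrightarrow> w \<in> base_words \<union> complement ` base_words"
proof
  assume "\<not> contains_3antipower w"
  then show "w \<in> base_words \<union> complement ` base_words"
    by (rule antipower_free_in_base_words)
next
  assume "w \<in> base_words \<union> complement ` base_words"
  then show "\<not> contains_3antipower w"
    using base_words_antipower_free contains_3antipower_complement by auto
qed

end
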